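(* Let $k\ge1$, $a>0$, and let $P:\{0,1,\ldots,k\}^2\to\mathbb R$ satisfy $P(0,l)=0$ for all $l\in\{0,\ldots,k\}$, $$-2aP(1,0)=P(j,l)+P(l,j)-a\big(P(j+1,l)-P(j,l)\big)-a\big(P(l+1,j)-P(l,j)\big)\quad\text{for all }(j,l)\in\{0,\ldots,k-1\}^2,$$ $$P(k,0)-aP(1,k)=P(j,k)+P(k,j)-a\big(P(j+1,k)-P(j,k)\big)\quad\text{for all }j\in\{0,\ldots,k-1\}.$$ Then $$P(k,k)=\big((1+1/a)^k-1\big)^2aP(1,0)+\big((1+1/a)^k-1\big)\big(aP(1,k)-P(k,0)\big).$$ *)

theory Defs
  imports Complex_Main
begin

end

theory Submission
  imports Defs
begin

text \<open>Put \<open>c = 1 + 1/a\<close> and \<open>h j l = c * P j l - P (j+1) l\<close>, so that the hypotheses say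
  \<open>h j l + h l j = -2 P 1 0\<close> and \<open>P k 0 - a P 1 k = a h j k + P k j\<close>. Against the weights
  \<open>c^(k-1-j)\<close>, whose total is \<open>a (c^k - 1)\<close>, the difference \<open>h\<close> telescopes to \<open>-P k l\<close>
  because \<open>P 0 l = 0\<close>. Weighting the symmetric relation in both indices therefore determines
  the weighted last row \<open>\<Sum> c^(k-1-l) P k l\<close>, and weighting the boundary relation then
  isolates \<open>P k k\<close>.\<close>

lemma sum_weighted_telescope:
  fixes c :: "'a::comm_ring_1" and f :: "nat \<Rightarrow> 'a"
  shows "(\<Sum>j<k. c^(k - Suc j) * (c * f j - f (Suc j))) = c^k * f 0 - f k"
proof (induction k)
  case 0
  show ?case by simp
next
  case (Suc k)
  have "(\<Sum>j<k. c^(Suc k - Suc j) * (c * f j - f (Suc j)))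
      = c * (\<Sum>j<k. c^(k - Suc j) * (c * f j - f (Suc j)))"
    unfolding sum_distrib_left
    by (intro sum.cong refl) (metis Suc_diff_Suc diff_Suc_Suc lessThan_iff mult.assoc power_Suc)
  then have "(\<Sum>j<Suc k. c^(Suc k - Suc j) * (c * f j - f (Suc j)))
      = c * (\<Sum>j<k. c^(k - Suc j) * (c * f j - f (Suc j))) + (c * f k - f (Suc k))"
    by simp
  also have "\<dots> = c^Suc k * f 0 - f (Suc k)"
    by (simp only: Suc.IH) (simp add: algebra_simps)
  finally show ?case .
qed

lemma sum_sum_symmetric_sum_const:
  fixes u :: "'i \<Rightarrow> 'a::comm_ring_1" and h :: "'i \<Rightarrow> 'i \<Rightarrow> 'a"
  assumes "\<And>j l. j \<in> A \<Longrightarrow> l \<in> A \<Longrightarrow> h j l + h l j = C"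
  shows "2 * (\<Sum>j\<in>A. \<Sum>l\<in>A. u j * u l * h j l) = C * (sum u A)^2"
proof -
  have swap: "(\<Sum>j\<in>A. \<Sum>l\<in>A. u j * u l * h l j) = (\<Sum>j\<in>A. \<Sum>l\<in>A. u j * u l * h j l)"
    by (subst sum.swap) (simp add: mult.commute)
  have "2 * (\<Sum>j\<in>A. \<Sum>l\<in>A. u j * u l * h j l)
      = (\<Sum>j\<in>A. \<Sum>l\<in>A. u j * u l * (h j l + h l j))"
    by (simp add: distrib_left sum.distrib swap)
  also have "\<dots> = (\<Sum>j\<in>A. \<Sum>l\<in>A. u j * u l * C)"
    by (intro sum.cong refl) (simp add: assms)
  also have "\<dots> = C * (sum u A)^2"
    by (simp add: power2_eq_square sum_product sum_distrib_left mult_ac)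
  finally show ?thesis .
qed

lemma sum_weighted_last_row:
  fixes c C :: "'a::comm_ring_1" and P :: "nat \<Rightarrow> nat \<Rightarrow> 'a"
  assumes "\<And>l. l < k \<Longrightarrow> P 0 l = 0"
    and "\<And>j l. j < k \<Longrightarrow> l < k \<Longrightarrow>
           (c * P j l - P (Suc j) l) + (c * P l j - P (Suc l) j) = C"
  shows "2 * (\<Sum>l<k. c^(k - Suc l) * P k l) = - C * (\<Sum>j<k. c^(k - Suc j))^2"
proof -
  define u where "u j = c^(k - Suc j)" for j
  define h where "h j l = c * P j l - P (Suc j) l" for j l
  have column: "(\<Sum>j<k. u j * h j l) = - P k l" if "l < k" for l
    using sum_weighted_telescope[of c k "\<lambda>j. P j l"] assms(1)[OF that]
    by (simp add: u_def h_def)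
  have "(\<Sum>j<k. \<Sum>l<k. u j * u l * h j l) = (\<Sum>l<k. u l * (\<Sum>j<k. u j * h j l))"
    by (subst sum.swap) (simp add: sum_distrib_left mult_ac)
  also have "\<dots> = - (\<Sum>l<k. u l * P k l)"
    by (simp add: column sum_negf)
  finally have "2 * (\<Sum>l<k. u l * P k l) = - (2 * (\<Sum>j<k. \<Sum>l<k. u j * u l * h j l))"
    by simp
  also have "\<dots> = - C * (sum u {..<k})^2"
    using sum_sum_symmetric_sum_const[of "{..<k}" h C u] assms(2) by (simp add: h_def)
  finally show ?thesis
    by (simp add: u_def)
qed

theorem lemma3:
  fixes k :: nat and a :: real and P :: "nat \<Rightarrow> nat \<Rightarrow> real"
  assumes "k \<ge> 1" and "a > 0"
    and "\<And>l. l \<le> k \<Longrightarrow> P 0 l = 0"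
    and "\<And>j l. j < k \<Longrightarrow> l < k \<Longrightarrow>
           - 2 * a * P 1 0 = P j l + P l j - a * (P (j+1) l - P j l) - a * (P (l+1) j - P l j)"
    and "\<And>j. j < k \<Longrightarrow>
           P k 0 - a * P 1 k = P j k + P k j - a * (P (j+1) k - P j k)"
  shows "P k k = ((1 + 1/a)^k - 1)^2 * a * P 1 0 + ((1 + 1/a)^k - 1) * (a * P 1 k - P k 0)"
proof -
  define c where "c = 1 + 1/a"
  define d where "d = c^k - 1"
  define u where "u j = c^(k - Suc j)" for j
  define h where "h j l = c * P j l - P (Suc j) l" for j l
  have ac: "a * c = 1 + a" using \<open>a > 0\<close> by (simp add: c_def field_simps)
  have a_h: "a * h j l = (1 + a) * P j l - a * P (Suc j) l" for j l
    by (simp add: h_def right_diff_distrib flip: mult.assoc ac)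
  have "sum u {..<k} * (c - 1) = d"
    using sum_weighted_telescope[of c k "\<lambda>_. 1"] by (simp add: u_def d_def sum_distrib_right)
  then have weight_sum: "sum u {..<k} = a * d"
    using \<open>a > 0\<close> by (simp add: c_def field_simps)
  have "h j l + h l j = - 2 * P 1 0" if "j < k" "l < k" for j l
  proof -
    have "a * (h j l + h l j) = a * (- 2 * P 1 0)"
      using assms(4)[OF that] by (simp add: distrib_left a_h algebra_simps)
    then show ?thesis using \<open>a > 0\<close> by (simp only: mult_cancel_left) simp
  qed
  then have row: "(\<Sum>l<k. u l * P k l) = P 1 0 * (a * d)^2"
    using sum_weighted_last_row[of k P c "- 2 * P 1 0"] assms(3) weight_sum
    by (simp add: u_def h_def)
  have column: "(\<Sum>j<k. u j * h j k) = - P k k"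
    using sum_weighted_telescope[of c k "\<lambda>j. P j k"] assms(3) by (simp add: u_def h_def)
  have "P k 0 - a * P 1 k = a * h j k + P k j" if "j < k" for j
    using assms(5)[OF that] by (simp add: a_h algebra_simps)
  then have "a * d * (P k 0 - a * P 1 k) = (\<Sum>j<k. u j * (a * h j k + P k j))"
    unfolding weight_sum[symmetric] sum_distrib_right by (intro sum.cong) simp_all
  also have "\<dots> = - a * P k k + P 1 0 * (a * d)^2"
    by (simp add: distrib_left sum.distrib row column mult.left_commute
        flip: sum_distrib_left)
  finally have "a * P k k = a * (a * d^2 * P 1 0 + d * (a * P 1 k - P k 0))"
    by (simp add: algebra_simps power2_eq_square)
  with \<open>a > 0\<close> show ?thesis
    by (simp add: d_def c_def mult_ac)
qed

end
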